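(* Let $X\subset[0,1]$ with $\overline{\dim}_B(X)=a$. Then $\overline{\dim}_{GB}(X)\ge 2a$.
   Context: For $\delta>0$ and $F\subset\mathbb{R}^d$, $N_\delta(F)$ is the number of cubes of the standard $\delta$-grid in $\mathbb{R}^d$ that intersect $F$, and $\overline{\dim}_B(F)=\limsup_{\delta\to0}\frac{\log N_\delta(F)}{-\log\delta}$. $C_u(X)$ is the set of uniformly continuous real functions on $X$, $\mathrm{graph}(f)=\{(x,f(x)):x\in X\}$, and $\overline{\dim}_{GB}(X)=\sup_{f\in C_u(X)}\overline{\dim}_B(\mathrm{graph}(f))$. *)

theory Defs
  imports "HOL-Analysis.Analysis"
begin

text \<open>A grid cube is indexed by an
  integer vector k (coordinates w.r.t. the standard basis); it is the closed cube
  prod over i of [k_i delta, (k_i+1) delta].\<close>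
definition grid_count :: "real \<Rightarrow> 'a::euclidean_space set \<Rightarrow> nat" where
  "grid_count \<delta> F = card {k :: 'a \<Rightarrow> int. (\<forall>i. i \<notin> Basis \<longrightarrow> k i = 0) \<and>
      (\<exists>x\<in>F. \<forall>i\<in>Basis. of_int (k i) * \<delta> \<le> x \<bullet> i \<and> x \<bullet> i \<le> (of_int (k i) + 1) * \<delta>)}"

definition upper_box_dim :: "'a::euclidean_space set \<Rightarrow> ereal" where
  "upper_box_dim F = Limsup (at_right 0) (\<lambda>\<delta>. ereal (ln (real (grid_count \<delta> F)) / - ln \<delta>))"

definition graph_of :: "real set \<Rightarrow> (real \<Rightarrow> real) \<Rightarrow> (real \<times> real) set" where
  "graph_of X f = {(x, f x) | x. x \<in> X}"

definition upper_graph_box_dim :: "real set \<Rightarrow> ereal" where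
  "upper_graph_box_dim X =
     (SUP f \<in> {f :: real \<Rightarrow> real. uniformly_continuous_on X f}. upper_box_dim (graph_of X f))"

end

theory Submission
  imports Defs "HOL-Real_Asymp.Real_Asymp"
begin

text \<open>
  Let \<open>b < a\<close>. Then \<open>X\<close> meets more than \<open>\<delta> powr -b\<close> grid intervals of length \<open>\<delta>\<close> for
  arbitrarily small \<open>\<delta>\<close>. At such a \<open>\<delta>\<close> take \<open>\<epsilon> \<approx> sqrt \<delta>\<close> and a sawtooth of period \<open>2\<epsilon>\<close> and slope
  \<open>\<approx> \<epsilon>/\<delta>\<close>. By pigeonhole, a twelfth of the occupied intervals carry points that are pairwise
  either \<open>\<epsilon>\<close>-apart or at least \<open>2\<delta>\<close> apart on one linear piece of the sawtooth, where its graph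
  climbs by at least \<open>2\<epsilon>\<close>; so the graph meets about \<open>\<delta> powr -b \<approx> \<epsilon> powr -2b\<close> grid squares of
  side \<open>\<epsilon>\<close>. Summing such sawtooth functions over rapidly decreasing scales, each of amplitude
  small against the previous scale and of slope dominating all previous ones, gives a
  uniformly continuous \<open>f\<close> whose graph has upper box dimension at least \<open>2b\<close>.
\<close>

section \<open>Grid counts and upper box dimension\<close>

lemma grid_count_real:
  fixes X :: "real set"
  shows "grid_count \<delta> X = card {j::int. \<exists>x\<in>X. of_int j * \<delta> \<le> x \<and> x \<le> (of_int j + 1) * \<delta>}"
  unfolding grid_count_def
  by (rule bij_betw_same_card, rule bij_betw_byWitness[where f' = "\<lambda>j i. if i = 1 then j else 0"])
    (auto simp: fun_eq_iff)

lemma finite_grid_cubes: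
  fixes F :: "'a::euclidean_space set"
  assumes "bounded F" "0 < \<delta>"
  shows "finite {k :: 'a \<Rightarrow> int. (\<forall>i. i \<notin> Basis \<longrightarrow> k i = 0) \<and>
      (\<exists>x\<in>F. \<forall>i\<in>Basis. of_int (k i) * \<delta> \<le> x \<bullet> i \<and> x \<bullet> i \<le> (of_int (k i) + 1) * \<delta>)}"
proof -
  obtain M where M: "\<forall>x\<in>F. norm x \<le> M" using assms(1) bounded_iff by blast
  define B where "B = {\<lceil>-M/\<delta>\<rceil> - 1 .. \<lfloor>M/\<delta>\<rfloor>}"
  have fin: "finite {k::'a\<Rightarrow>int. \<forall>i. (i \<in> Basis \<longrightarrow> k i \<in> B) \<and> (i \<notin> Basis \<longrightarrow> k i = 0)}"
    by (rule finite_set_of_finite_funs) (auto simp: B_def)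
  have "k i \<in> B"
    if i: "i \<in> Basis" and x: "x \<in> F"
      and cube: "\<forall>i\<in>Basis. of_int (k i) * \<delta> \<le> x \<bullet> i \<and> x \<bullet> i \<le> (of_int (k i) + 1) * \<delta>"
    for k :: "'a \<Rightarrow> int" and i x :: 'a
  proof -
    have "\<bar>x \<bullet> i\<bar> \<le> M" using M x Basis_le_norm[OF i, of x] by fastforce
    then have "of_int (k i) * \<delta> \<le> M" "-M \<le> (of_int (k i) + 1) * \<delta>" using cube i by fastforce+
    then have "of_int (k i) \<le> M / \<delta>" "-M / \<delta> \<le> of_int (k i) + 1"
      using assms(2) by (simp_all add: field_simps)
    then show "k i \<in> B" unfolding B_def by (simp add: le_floor_iff, linarith)
  qed
  then show ?thesis
    by (intro finite_subset[OF _ fin]) blast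
qed

lemma card_le_grid_count:
  fixes F :: "'a::euclidean_space set"
  assumes "bounded F" "0 < \<delta>" "S \<subseteq> F" "finite S"
    and separated: "\<And>p q. p \<in> S \<Longrightarrow> q \<in> S \<Longrightarrow> p \<noteq> q \<Longrightarrow> \<exists>i\<in>Basis. \<delta> \<le> \<bar>p \<bullet> i - q \<bullet> i\<bar>"
  shows "card S \<le> grid_count \<delta> F"
proof -
  define cube where "cube p = (\<lambda>i. if i \<in> Basis then \<lfloor>(p \<bullet> i) / \<delta>\<rfloor> else 0)" for p :: 'a
  have "inj_on cube S"
  proof (rule inj_onI, rule ccontr)
    fix p q assume "p \<in> S" "q \<in> S" "cube p = cube q" "p \<noteq> q"
    then obtain i where i: "i \<in> Basis" "\<delta> \<le> \<bar>p \<bullet> i - q \<bullet> i\<bar>" "\<lfloor>(p \<bullet> i) / \<delta>\<rfloor> = \<lfloor>(q \<bullet> i) / \<delta>\<rfloor>"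
      using separated by (metis cube_def)
    then have "\<bar>(p \<bullet> i - q \<bullet> i) / \<delta>\<bar> < 1" by (simp add: diff_divide_distrib, linarith)
    then show False using i(2) assms(2) by (simp add: abs_divide)
  qed
  moreover have "of_int (cube p i) * \<delta> \<le> p \<bullet> i \<and> p \<bullet> i \<le> (of_int (cube p i) + 1) * \<delta>"
    if "i \<in> Basis" for p i
  proof -
    have "cube p i = \<lfloor>(p \<bullet> i) / \<delta>\<rfloor>" using that by (simp add: cube_def)
    then have "of_int (cube p i) \<le> (p \<bullet> i) / \<delta>" "(p \<bullet> i) / \<delta> \<le> of_int (cube p i) + 1"
      by linarith+
    then show ?thesis using assms(2) by (simp add: pos_le_divide_eq pos_divide_le_eq)
  qed
  then have "cube ` S \<subseteq> {k :: 'a \<Rightarrow> int. (\<forall>i. i \<notin> Basis \<longrightarrow> k i = 0) \<and>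
      (\<exists>x\<in>F. \<forall>i\<in>Basis. of_int (k i) * \<delta> \<le> x \<bullet> i \<and> x \<bullet> i \<le> (of_int (k i) + 1) * \<delta>)}"
    using assms(3) by (auto simp: cube_def) blast
  ultimately show ?thesis
    unfolding grid_count_def by (rule card_inj_on_le[OF _ _ finite_grid_cubes[OF assms(1,2)]])
qed

lemma upper_box_dim_nonneg: "0 \<le> upper_box_dim (F :: 'a::euclidean_space set)"
  unfolding upper_box_dim_def
proof (rule le_Limsup)
  show "\<forall>\<^sub>F \<delta> in at_right 0. 0 \<le> ereal (ln (real (grid_count \<delta> F)) / - ln \<delta>)"
    using eventually_at_right_real[OF zero_less_one]
  proof (rule eventually_mono)
    fix \<delta> :: real assume "\<delta> \<in> {0<..<1}"
    moreover have "0 \<le> ln (real (grid_count \<delta> F))"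
      by (cases "grid_count \<delta> F = 0") auto
    ultimately show "0 \<le> ereal (ln (real (grid_count \<delta> F)) / - ln \<delta>)" by (simp add: divide_nonneg_neg)
  qed
qed simp

lemma frequently_grid_count_gt:
  fixes F :: "'a::euclidean_space set"
  assumes "0 \<le> b" "ereal b < upper_box_dim F"
  shows "\<exists>\<^sub>F \<delta> in at_right 0. \<delta> powr (-b) < real (grid_count \<delta> F)"
proof (rule ccontr)
  assume "\<not> ?thesis"
  then have "\<forall>\<^sub>F \<delta> in at_right 0. real (grid_count \<delta> F) \<le> \<delta> powr (-b)"
    by (simp add: not_frequently not_less)
  moreover have "\<forall>\<^sub>F \<delta> in at_right 0. \<delta> \<in> {0<..<1::real}"
    by (rule eventually_at_right_real) simp
  ultimately have "\<forall>\<^sub>F \<delta> in at_right 0. ereal (ln (real (grid_count \<delta> F)) / - ln \<delta>) \<le> ereal b"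
  proof eventually_elim
    case (elim \<delta>)
    have "ln (real (grid_count \<delta> F)) \<le> b * - ln \<delta>"
    proof (cases "grid_count \<delta> F = 0")
      case False
      then have "ln (real (grid_count \<delta> F)) \<le> ln (\<delta> powr (-b))"
        using elim by (subst ln_le_cancel_iff) auto
      then show ?thesis using elim by (simp add: ln_powr)
    qed (use elim assms(1) in \<open>simp add: mult_nonneg_nonpos\<close>)
    then have "ln (real (grid_count \<delta> F)) / - ln \<delta> \<le> b"
      using elim by (subst pos_divide_le_eq) auto
    then show ?case by simp
  qed
  then have "upper_box_dim F \<le> ereal b"
    unfolding upper_box_dim_def by (rule Limsup_bounded)
  then show False using assms(2) by simp
qed

lemma upper_box_dim_ge_sequence:
  fixes F :: "'a::euclidean_space set"
  assumes s: "filterlim s (at_right 0) sequentially"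
    and c: "\<And>k. c k \<le> ln (real (grid_count (s k) F)) / - ln (s k)"
    and lim: "c \<longlonglongrightarrow> t"
  shows "ereal t \<le> upper_box_dim F"
proof (rule dense_le)
  fix y assume "y < ereal t"
  then have "\<forall>\<^sub>F k in sequentially. y < ereal (c k)"
    using lim by (intro order_tendstoD(1)) (simp_all add: lim_ereal)
  show "y \<le> upper_box_dim F"
  proof (rule ccontr)
    assume "\<not> y \<le> upper_box_dim F"
    then have "\<forall>\<^sub>F \<delta> in at_right 0. ereal (ln (real (grid_count \<delta> F)) / - ln \<delta>) < y"
      unfolding upper_box_dim_def by (intro Limsup_lessD) simp
    then have "\<forall>\<^sub>F k in sequentially. ereal (ln (real (grid_count (s k) F)) / - ln (s k)) < y"
      using s by (rule eventually_compose_filterlim)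
    with \<open>\<forall>\<^sub>F k in sequentially. y < ereal (c k)\<close> have "\<forall>\<^sub>F k in sequentially. False"
      by eventually_elim (use c in \<open>meson ereal_less_eq(3) less_trans not_less\<close>)
    then show False by simp
  qed
qed

text \<open>No positivity hypothesis is needed because \<open>ln 0 = 0\<close>.\<close>

lemma ln_of_nat_mono:
  assumes "m \<le> n"
  shows "ln (real m) \<le> ln (real n)"
proof (cases "m = 0")
  case True
  then show ?thesis by (cases "n = 0") (simp_all add: ln_ge_zero)
qed (use assms in simp)


section \<open>Sawtooth functions\<close>

text \<open>
  The points \<open>e/2 * (4m + q)\<close> have spacing \<open>2e\<close>; the distance to them has slope \<open>1\<close> on every
  interval \<open>[n e/2, (n+1) e/2)\<close> with \<open>n mod 4 = q\<close>.
\<close>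

definition offset_lattice :: "real \<Rightarrow> int \<Rightarrow> real set" where
  "offset_lattice e q = range (\<lambda>m::int. e/2 * of_int (4*m + q))"

lemma half_step_floor_bounds:
  fixes e x :: real
  assumes "0 < e"
  shows "e/2 * of_int \<lfloor>2*x/e\<rfloor> \<le> x" "x < e/2 * of_int \<lfloor>2*x/e\<rfloor> + e/2"
proof -
  have "e/2 * of_int \<lfloor>2*x/e\<rfloor> \<le> e/2 * (2*x/e)"
    using assms by (intro mult_left_mono) auto
  then show "e/2 * of_int \<lfloor>2*x/e\<rfloor> \<le> x" using assms by simp
  have "e/2 * (2*x/e) < e/2 * (of_int \<lfloor>2*x/e\<rfloor> + 1)"
    using assms by (intro mult_strict_left_mono) auto
  then show "x < e/2 * of_int \<lfloor>2*x/e\<rfloor> + e/2" using assms by (simp add: algebra_simps)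
qed

lemma infdist_offset_lattice:
  fixes e x :: real
  assumes e: "0 < e" and q: "\<lfloor>2*x/e\<rfloor> mod 4 = q"
  shows "infdist x (offset_lattice e q) = x - e/2 * of_int \<lfloor>2*x/e\<rfloor>"
proof (rule antisym)
  let ?n = "\<lfloor>2*x/e\<rfloor>"
  have bounds: "e/2 * of_int ?n \<le> x" "x < e/2 * of_int ?n + e/2"
    using half_step_floor_bounds[OF e] by blast+
  have "?n = 4 * (?n div 4) + q" using q by presburger
  then have "e/2 * of_int ?n \<in> offset_lattice e q"
    unfolding offset_lattice_def by (metis rangeI)
  from infdist_le[OF this, of x] show "infdist x (offset_lattice e q) \<le> x - e/2 * of_int ?n"
    using bounds by (simp add: dist_real_def)
  have ne: "offset_lattice e q \<noteq> {}" by (simp add: offset_lattice_def)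
  show "x - e/2 * of_int ?n \<le> infdist x (offset_lattice e q)"
    unfolding infdist_notempty[OF ne]
  proof (rule cINF_greatest)
    fix y assume "y \<in> offset_lattice e q"
    then obtain m where y: "y = e/2 * of_int (4*m + q)" unfolding offset_lattice_def by blast
    have "4*m + q \<le> ?n \<or> ?n + 4 \<le> 4*m + q" using q by presburger
    then have "y \<le> e/2 * of_int ?n \<or> e/2 * (of_int ?n + 4) \<le> y"
      unfolding y using e by (auto intro: mult_left_mono)
    then show "x - e/2 * of_int ?n \<le> dist x y"
      using bounds e by (auto simp: dist_real_def algebra_simps)
  qed (fact ne)
qed

lemma infdist_offset_lattice_le:
  fixes e x :: real
  assumes e: "0 < e"
  shows "infdist x (offset_lattice e q) \<le> 2*e"
proof -
  let ?n = "\<lfloor>2*x/e\<rfloor>"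
  define m where "m = (?n - q) div 4"
  have m: "4*m + q \<le> ?n" "?n \<le> 4*m + q + 3" unfolding m_def by presburger+
  have "e/2 * of_int (4*m + q) \<le> e/2 * of_int ?n" "e/2 * of_int ?n \<le> e/2 * of_int (4*m + q + 3)"
    using m e by (simp_all add: mult_left_mono)
  moreover have "e/2 * of_int (4*m + q) \<in> offset_lattice e q"
    unfolding offset_lattice_def by (rule rangeI)
  ultimately show ?thesis
    using infdist_le[of "e/2 * of_int (4*m + q)" "offset_lattice e q" x] half_step_floor_bounds[OF e, of x]
    by (auto simp: dist_real_def algebra_simps)
qed

lemma offset_lattice_isometric_or_far:
  fixes e x x' :: real
  assumes e: "0 < e" and q: "\<lfloor>2*x/e\<rfloor> mod 4 = q" "\<lfloor>2*x'/e\<rfloor> mod 4 = q"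
  shows "e < \<bar>x - x'\<bar> \<or>
    \<bar>infdist x (offset_lattice e q) - infdist x' (offset_lattice e q)\<bar> = \<bar>x - x'\<bar>"
proof (cases "\<lfloor>2*x/e\<rfloor> = \<lfloor>2*x'/e\<rfloor>")
  case True
  then show ?thesis by (simp add: infdist_offset_lattice[OF e] q)
next
  case False
  then have "\<lfloor>2*x'/e\<rfloor> + 4 \<le> \<lfloor>2*x/e\<rfloor> \<or> \<lfloor>2*x/e\<rfloor> + 4 \<le> \<lfloor>2*x'/e\<rfloor>"
    using q by presburger
  then have "e/2 * (of_int \<lfloor>2*x'/e\<rfloor> + 4) \<le> e/2 * of_int \<lfloor>2*x/e\<rfloor> \<or>
      e/2 * (of_int \<lfloor>2*x/e\<rfloor> + 4) \<le> e/2 * of_int \<lfloor>2*x'/e\<rfloor>"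
    using e by (auto intro: mult_left_mono)
  then show ?thesis
    using half_step_floor_bounds[OF e, of x] half_step_floor_bounds[OF e, of x'] e
    by (auto simp: algebra_simps)
qed

lemma grid_cell_representatives:
  fixes X :: "real set"
  shows "\<exists>K :: int set. \<exists>p. card K = grid_count \<delta> X \<and>
    (\<forall>j\<in>K. p j \<in> X \<and> of_int j * \<delta> \<le> p j \<and> p j \<le> (of_int j + 1) * \<delta>)"
proof -
  define K where "K = {j::int. \<exists>x\<in>X. of_int j * \<delta> \<le> x \<and> x \<le> (of_int j + 1) * \<delta>}"
  have "\<forall>j\<in>K. \<exists>x. x \<in> X \<and> of_int j * \<delta> \<le> x \<and> x \<le> (of_int j + 1) * \<delta>"
    unfolding K_def by blast
  from bchoice[OF this] obtain p
    where "\<forall>j\<in>K. p j \<in> X \<and> of_int j * \<delta> \<le> p j \<and> p j \<le> (of_int j + 1) * \<delta>" ..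
  moreover have "card K = grid_count \<delta> X" unfolding K_def by (rule grid_count_real[symmetric])
  ultimately show ?thesis by blast
qed

lemma grid_cells_three_apart:
  fixes \<delta> x x' :: real and j j' :: int
  assumes "0 < \<delta>" "j mod 3 = j' mod 3" "j \<noteq> j'"
    and "of_int j * \<delta> \<le> x" "x \<le> (of_int j + 1) * \<delta>"
    and "of_int j' * \<delta> \<le> x'" "x' \<le> (of_int j' + 1) * \<delta>"
  shows "2*\<delta> \<le> \<bar>x - x'\<bar>"
proof -
  have "j + 3 \<le> j' \<or> j' + 3 \<le> j" using assms(2,3) by presburger
  then show ?thesis
  proof
    assume "j + 3 \<le> j'"
    then have "of_int j + 3 \<le> (of_int j' :: real)" by linarith
    then have "(of_int j + 3) * \<delta> \<le> of_int j' * \<delta>" using assms(1) by (simp add: mult_right_mono)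
    then show ?thesis using assms(4-7) by (simp add: algebra_simps)
  next
    assume "j' + 3 \<le> j"
    then have "of_int j' + 3 \<le> (of_int j :: real)" by linarith
    then have "(of_int j' + 3) * \<delta> \<le> of_int j * \<delta>" using assms(1) by (simp add: mult_right_mono)
    then show ?thesis using assms(4-7) by (simp add: algebra_simps)
  qed
qed

lemma pigeonhole_fibre:
  assumes "finite J" "finite L" "L \<noteq> {}" "\<phi> ` J \<subseteq> L"
  shows "\<exists>l\<in>L. card J \<le> card L * card {j\<in>J. \<phi> j = l}"
proof (rule ccontr)
  assume "\<not> ?thesis"
  then have small: "card L * card {j\<in>J. \<phi> j = l} < card J" if "l \<in> L" for l
    using that by (simp add: not_le)
  have "card J = (\<Sum>l\<in>L. card {j\<in>J. \<phi> j = l})"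
    using sum_fun_comp[OF assms(1,2,4), of "\<lambda>_. 1::nat"] by simp
  then have "card L * card J = (\<Sum>l\<in>L. card L * card {j\<in>J. \<phi> j = l})"
    by (simp add: sum_distrib_left)
  also have "\<dots> < (\<Sum>l\<in>L. card J)"
    using assms(2,3) small by (rule sum_strict_mono)
  finally show False by simp
qed

definition sawtooth_separated :: "real \<Rightarrow> real \<Rightarrow> int \<Rightarrow> real set \<Rightarrow> bool" where
  "sawtooth_separated \<epsilon> s q S \<longleftrightarrow> (\<forall>x\<in>S. \<forall>x'\<in>S. x \<noteq> x' \<longrightarrow> \<epsilon> < \<bar>x - x'\<bar> \<or>
     (2*\<epsilon> \<le> s * \<bar>x - x'\<bar> \<and>
      \<bar>infdist x (offset_lattice \<epsilon> q) - infdist x' (offset_lattice \<epsilon> q)\<bar> = \<bar>x - x'\<bar>))"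

lemma sawtooth_separated_image:
  fixes \<delta> \<epsilon> :: real and p :: "int \<Rightarrow> real"
  assumes \<delta>: "0 < \<delta>" and \<epsilon>: "0 < \<epsilon>"
    and cell: "\<And>j. j \<in> J \<Longrightarrow> of_int j * \<delta> \<le> p j \<and> p j \<le> (of_int j + 1) * \<delta>"
    and r: "\<And>j. j \<in> J \<Longrightarrow> j mod 3 = r"
    and q: "\<And>j. j \<in> J \<Longrightarrow> \<lfloor>2 * p j / \<epsilon>\<rfloor> mod 4 = q"
  shows "inj_on p J" "sawtooth_separated \<epsilon> (\<epsilon>/\<delta>) q (p ` J)"
proof -
  have far: "2*\<delta> \<le> \<bar>p j - p j'\<bar>" if "j \<in> J" "j' \<in> J" "j \<noteq> j'" for j j'
    using cell[OF that(1)] cell[OF that(2)] r[OF that(1)] r[OF that(2)] that(3)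
    by (intro grid_cells_three_apart[OF \<delta>, of j j']) simp_all
  show "inj_on p J"
  proof (rule inj_onI, rule ccontr)
    fix j j' assume "j \<in> J" "j' \<in> J" "p j = p j'" "j \<noteq> j'"
    then show False using far[of j j'] \<delta> by simp
  qed
  show "sawtooth_separated \<epsilon> (\<epsilon>/\<delta>) q (p ` J)"
    unfolding sawtooth_separated_def
  proof (intro ballI impI)
    fix x x' assume "x \<in> p ` J" "x' \<in> p ` J" "x \<noteq> x'"
    then obtain j j' where jj: "j \<in> J" "j' \<in> J" "j \<noteq> j'" and x: "x = p j" "x' = p j'" by blast
    have "\<epsilon>/\<delta> * (2*\<delta>) \<le> \<epsilon>/\<delta> * \<bar>x - x'\<bar>"
      using far[OF jj] \<delta> \<epsilon> x by (intro mult_left_mono) simp_all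
    then have "2*\<epsilon> \<le> \<epsilon>/\<delta> * \<bar>x - x'\<bar>" using \<delta> by simp
    with offset_lattice_isometric_or_far[OF \<epsilon>, of x q x'] q[OF jj(1)] q[OF jj(2)] x
    show "\<epsilon> < \<bar>x - x'\<bar> \<or> (2*\<epsilon> \<le> \<epsilon>/\<delta> * \<bar>x - x'\<bar> \<and>
        \<bar>infdist x (offset_lattice \<epsilon> q) - infdist x' (offset_lattice \<epsilon> q)\<bar> = \<bar>x - x'\<bar>)"
      by blast
  qed
qed

lemma sawtooth_separated_subset:
  fixes X :: "real set"
  assumes \<delta>: "0 < \<delta>" and \<epsilon>: "0 < \<epsilon>"
  shows "\<exists>q S. finite S \<and> S \<subseteq> X \<and> grid_count \<delta> X \<le> 12 * card S \<and>
    sawtooth_separated \<epsilon> (\<epsilon>/\<delta>) q S"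
proof -
  obtain K p where K: "card K = grid_count \<delta> X"
    and p: "\<forall>j\<in>K. p j \<in> X \<and> of_int j * \<delta> \<le> p j \<and> p j \<le> (of_int j + 1) * \<delta>"
    using grid_cell_representatives[of \<delta> X] by blast
  show ?thesis
  proof (cases "finite K")
    case False
    then have "grid_count \<delta> X = 0" using K by simp
    then show ?thesis by (intro exI[of _ 0] exI[of _ "{}"]) (simp add: sawtooth_separated_def)
  next
    case True
    define label where "label j = (j mod 3, \<lfloor>2 * p j / \<epsilon>\<rfloor> mod 4)" for j
    have "label ` K \<subseteq> {0..2} \<times> {0..3}" by (auto simp: label_def)
    from pigeonhole_fibre[OF True _ _ this] obtain r q
      where card_K: "card K \<le> 12 * card {j\<in>K. label j = (r, q)}" by auto
    define J where "J = {j\<in>K. label j = (r, q)}"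
    have inj: "inj_on p J" and sep: "sawtooth_separated \<epsilon> (\<epsilon>/\<delta>) q (p ` J)"
      using p by (intro sawtooth_separated_image[OF \<delta> \<epsilon>, where r = r]; simp add: J_def label_def)+
    from inj have "card (p ` J) = card J" by (rule card_image)
    moreover have "finite (p ` J)" "p ` J \<subseteq> X" using True p by (auto simp: J_def)
    ultimately show ?thesis using K card_K sep J_def by (intro exI[of _ q] exI[of _ "p ` J"]) simp
  qed
qed

locale sawtooth_series =
  fixes lam E :: "nat \<Rightarrow> real" and Q :: "nat \<Rightarrow> int"
  assumes lam_nonneg: "0 \<le> lam k"
    and E_pos: "0 < E k"
    and E_Suc_le: "E (Suc k) \<le> E k / 2"
    and lam_E_Suc_le: "lam (Suc k) * E (Suc k) \<le> E k / 16"
begin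

definition tooth :: "nat \<Rightarrow> real \<Rightarrow> real" where
  "tooth k x = lam k * infdist x (offset_lattice (E k) (Q k))"

definition sawtooth :: "real \<Rightarrow> real" where
  "sawtooth x = (\<Sum>k. tooth k x)"

lemma tooth_nonneg: "0 \<le> tooth k x"
  by (simp add: tooth_def lam_nonneg infdist_nonneg)

lemma tooth_le: "tooth k x \<le> 2 * (lam k * E k)"
  using mult_left_mono[OF infdist_offset_lattice_le[OF E_pos[of k], of x "Q k"] lam_nonneg[of k]]
  by (simp add: tooth_def mult.left_commute)

lemma tooth_lipschitz: "\<bar>tooth k x - tooth k y\<bar> \<le> lam k * \<bar>x - y\<bar>"
proof -
  have "\<bar>tooth k x - tooth k y\<bar> =
      lam k * \<bar>infdist x (offset_lattice (E k) (Q k)) - infdist y (offset_lattice (E k) (Q k))\<bar>"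
    using lam_nonneg[of k] by (simp add: tooth_def abs_mult right_diff_distrib[symmetric])
  also have "\<dots> \<le> lam k * \<bar>x - y\<bar>"
    using infdist_triangle_abs[of x "offset_lattice (E k) (Q k)" y] lam_nonneg[of k]
    by (intro mult_left_mono) (simp_all add: dist_real_def)
  finally show ?thesis .
qed

lemma E_add_le: "E (k + j) \<le> E k / 2^j"
proof (induction j)
  case (Suc j)
  have "E (k + Suc j) \<le> E (k + j) / 2" using E_Suc_le[of "k + j"] by simp
  also have "\<dots> \<le> E k / 2 ^ Suc j" using Suc.IH by simp
  finally show ?case .
qed simp

lemma summable_lam_E: "summable (\<lambda>k. lam k * E k)"
proof -
  have geometric: "summable (\<lambda>k. E 0 / 16 * (1/2::real) ^ k)"
    by (intro summable_mult summable_geometric) simp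
  have "norm (lam (Suc k) * E (Suc k)) \<le> E 0 / 16 * (1/2) ^ k" for k
  proof -
    have "lam (Suc k) * E (Suc k) \<le> E k / 16" by (rule lam_E_Suc_le)
    also have "\<dots> \<le> E 0 / 2 ^ k / 16" using E_add_le[of 0 k] by simp
    also have "\<dots> = E 0 / 16 * (1/2) ^ k" by (simp add: power_one_over)
    finally show ?thesis using lam_nonneg[of "Suc k"] E_pos[of "Suc k"] by simp
  qed
  then have "summable (\<lambda>k. lam (Suc k) * E (Suc k))"
    by (rule summable_comparison_test'[OF geometric])
  then show ?thesis using summable_Suc_iff[of "\<lambda>k. lam k * E k"] by simp
qed

lemma norm_tooth_le: "norm (tooth k x) \<le> 2 * (lam k * E k)"
  using tooth_le tooth_nonneg by simp

lemma summable_tooth: "summable (\<lambda>k. tooth k x)"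
  by (rule summable_comparison_test'[OF summable_mult[OF summable_lam_E, of 2] norm_tooth_le])

lemma continuous_on_sawtooth: "continuous_on UNIV sawtooth"
proof (rule uniform_limit_theorem)
  show "uniform_limit UNIV (\<lambda>n x. \<Sum>k<n. tooth k x) sawtooth sequentially"
    unfolding sawtooth_def[abs_def]
    by (rule Weierstrass_m_test[OF norm_tooth_le summable_mult[OF summable_lam_E, of 2]])
  show "\<forall>\<^sub>F n in sequentially. continuous_on UNIV (\<lambda>x. \<Sum>k<n. tooth k x)"
    unfolding tooth_def by (intro always_eventually allI continuous_intros)
qed simp

lemma sawtooth_split:
  "sawtooth x = (\<Sum>j<k. tooth j x) + tooth k x + (\<Sum>j. tooth (j + Suc k) x)"
  using suminf_split_initial_segment[OF summable_tooth, of x "Suc k"]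
  by (simp add: sawtooth_def)

lemma tail_nonneg: "0 \<le> (\<Sum>j. tooth (j + m) x)"
  using summable_ignore_initial_segment[OF summable_tooth] tooth_nonneg by (rule suminf_nonneg)

lemma tail_le: "(\<Sum>j. tooth (j + Suc k) x) \<le> E k / 4"
proof -
  have "tooth (j + Suc k) x \<le> E k / 8 * (1/2) ^ j" for j
  proof -
    have "tooth (j + Suc k) x \<le> 2 * (lam (Suc (k + j)) * E (Suc (k + j)))"
      using tooth_le by (simp add: add.commute)
    also have "\<dots> \<le> E (k + j) / 8" using lam_E_Suc_le[of "k + j"] by simp
    also have "\<dots> \<le> E k / 8 * (1/2) ^ j" using E_add_le[of k j] by (simp add: power_one_over)
    finally show ?thesis .
  qed
  moreover have "summable (\<lambda>j. E k / 8 * (1/2::real) ^ j)"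
    by (intro summable_mult summable_geometric) simp
  ultimately have "(\<Sum>j. tooth (j + Suc k) x) \<le> (\<Sum>j. E k / 8 * (1/2) ^ j)"
    by (intro suminf_le summable_ignore_initial_segment[OF summable_tooth])
  also have "\<dots> = E k / 8 * (\<Sum>j. (1/2) ^ j)"
    by (rule suminf_mult[OF summable_geometric]) simp
  also have "\<dots> = E k / 4" by (simp add: suminf_geometric)
  finally show ?thesis .
qed

lemma sawtooth_dominant_tooth:
  assumes iso: "\<bar>infdist x (offset_lattice (E k) (Q k)) - infdist x' (offset_lattice (E k) (Q k))\<bar> = \<bar>x - x'\<bar>"
  shows "(lam k - (\<Sum>j<k. lam j)) * \<bar>x - x'\<bar> - E k / 4 \<le> \<bar>sawtooth x - sawtooth x'\<bar>"
proof -
  have "\<bar>tooth k x - tooth k x'\<bar> = lam k * \<bar>x - x'\<bar>"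
    using iso lam_nonneg[of k] by (simp add: tooth_def abs_mult right_diff_distrib[symmetric])
  moreover have "\<bar>(\<Sum>j<k. tooth j x) - (\<Sum>j<k. tooth j x')\<bar> \<le> (\<Sum>j<k. lam j) * \<bar>x - x'\<bar>"
  proof -
    have "\<bar>(\<Sum>j<k. tooth j x) - (\<Sum>j<k. tooth j x')\<bar> \<le> (\<Sum>j<k. \<bar>tooth j x - tooth j x'\<bar>)"
      by (simp only: sum_subtractf[symmetric] sum_abs)
    also have "\<dots> \<le> (\<Sum>j<k. lam j * \<bar>x - x'\<bar>)" by (intro sum_mono tooth_lipschitz)
    finally show ?thesis by (simp add: sum_distrib_right)
  qed
  moreover have "\<bar>(\<Sum>j. tooth (j + Suc k) x) - (\<Sum>j. tooth (j + Suc k) x')\<bar> \<le> E k / 4"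
    using tail_nonneg[of "Suc k" x] tail_nonneg[of "Suc k" x'] tail_le[of k x] tail_le[of k x']
    by linarith
  ultimately show ?thesis
    unfolding sawtooth_split[of x k] sawtooth_split[of x' k] left_diff_distrib by linarith
qed

lemma uniformly_continuous_on_sawtooth:
  assumes "X \<subseteq> {a..b}"
  shows "uniformly_continuous_on X sawtooth"
proof -
  have "uniformly_continuous_on {a..b} sawtooth"
    using continuous_on_subset[OF continuous_on_sawtooth] by (intro compact_uniformly_continuous) auto
  then show ?thesis using assms unfolding uniformly_continuous_on_def by (meson subsetD)
qed

lemma bounded_graph_sawtooth:
  assumes "X \<subseteq> {a..b}"
  shows "bounded (graph_of X sawtooth)"
proof (rule bounded_subset)
  show "bounded ((\<lambda>x. (x, sawtooth x)) ` {a..b})"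
    by (intro compact_imp_bounded compact_continuous_image continuous_intros
        continuous_on_subset[OF continuous_on_sawtooth]) auto
  show "graph_of X sawtooth \<subseteq> (\<lambda>x. (x, sawtooth x)) ` {a..b}"
    using assms by (auto simp: graph_of_def)
qed

lemma E_tendsto_zero: "filterlim E (at_right 0) sequentially"
proof (rule tendsto_imp_filterlim_at_right)
  have geometric: "(\<lambda>k. E 0 * (1/2)^k) \<longlonglongrightarrow> 0"
    by (rule tendsto_mult_right_zero[OF LIMSEQ_power_zero]) simp
  have "\<forall>k. E k \<le> E 0 * (1/2)^k"
    using E_add_le[of 0] by (simp add: power_one_over)
  moreover have "\<forall>k. 0 \<le> E k" using E_pos by (simp add: less_imp_le)
  ultimately show "E \<longlonglongrightarrow> 0"
    using tendsto_sandwich[OF always_eventually always_eventually tendsto_const geometric] by blast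
qed (simp add: E_pos)

lemma card_le_grid_count_graph:
  assumes bounded: "bounded (graph_of X sawtooth)"
    and S: "S \<subseteq> X" "finite S" "sawtooth_separated (E k) s (Q k) S"
    and slope: "s \<le> lam k - (\<Sum>j<k. lam j)"
  shows "card S \<le> grid_count (E k) (graph_of X sawtooth)"
proof -
  define G where "G = (\<lambda>x. (x, sawtooth x)) ` S"
  have "inj_on (\<lambda>x. (x, sawtooth x)) S" by (rule inj_onI) simp
  then have "card G = card S" unfolding G_def by (rule card_image)
  moreover have "card G \<le> grid_count (E k) (graph_of X sawtooth)"
  proof (rule card_le_grid_count[OF bounded E_pos])
    show "G \<subseteq> graph_of X sawtooth" "finite G" using S by (auto simp: G_def graph_of_def)
    fix p p' assume "p \<in> G" "p' \<in> G" "p \<noteq> p'"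
    then obtain x x' where x: "x \<in> S" "x' \<in> S" "x \<noteq> x'"
      and p: "p = (x, sawtooth x)" "p' = (x', sawtooth x')" unfolding G_def by blast
    have "E k < \<bar>x - x'\<bar> \<or> E k \<le> \<bar>sawtooth x - sawtooth x'\<bar>"
    proof (cases "E k < \<bar>x - x'\<bar>")
      case False
      then have steep: "2 * E k \<le> s * \<bar>x - x'\<bar>"
        and iso: "\<bar>infdist x (offset_lattice (E k) (Q k)) - infdist x' (offset_lattice (E k) (Q k))\<bar> =
          \<bar>x - x'\<bar>"
        using S(3) x unfolding sawtooth_separated_def by blast+
      have "s * \<bar>x - x'\<bar> \<le> (lam k - (\<Sum>j<k. lam j)) * \<bar>x - x'\<bar>"
        using slope by (rule mult_right_mono) simp
      with steep sawtooth_dominant_tooth[OF iso] E_pos[of k] show ?thesis by linarith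
    qed simp
    moreover have "(1, 0) \<in> (Basis :: (real \<times> real) set)" "(0, 1) \<in> (Basis :: (real \<times> real) set)"
      by (simp_all add: Basis_prod_def)
    ultimately show "\<exists>i\<in>Basis. E k \<le> \<bar>p \<bullet> i - p' \<bullet> i\<bar>"
      unfolding p by (force simp: less_imp_le)
  qed
  ultimately show ?thesis by simp
qed

end

section \<open>Choice of the scales\<close>

lemma eventually_scale_choice:
  fixes L e b \<eta> :: real
  assumes e: "0 < e" and b: "0 < b" and \<eta>: "0 < \<eta>"
  shows "\<forall>\<^sub>F \<delta> in at_right 0. 0 < \<delta> \<and> (\<exists>\<epsilon>. 0 < \<epsilon> \<and> \<epsilon> < 1 \<and> \<epsilon> \<le> e/2 \<and>
    (L + \<epsilon>/\<delta>) * \<epsilon> \<le> e/16 \<and> 2*b - \<eta> < ln (\<delta> powr (-b) / 12) / - ln \<epsilon>)"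
proof -
  \<comment> \<open>\<open>\<epsilon>\<^sup>2/\<delta> = e/32\<close> caps the height of a tooth of slope \<open>\<epsilon>/\<delta>\<close>, and \<open>\<epsilon> \<approx> sqrt \<delta>\<close> turns
    \<open>\<delta> powr -b\<close> boxes of side \<open>\<epsilon>\<close> into dimension \<open>2b\<close>.\<close>
  define \<epsilon> where "\<epsilon> \<delta> = sqrt (e*\<delta>/32)" for \<delta> :: real
  have \<epsilon>_lim: "(\<epsilon> \<longlongrightarrow> 0) (at_right 0)"
    unfolding \<epsilon>_def using e by real_asymp
  have "((\<lambda>\<delta>. ln (\<delta> powr (-b) / 12) / - ln (\<epsilon> \<delta>)) \<longlongrightarrow> 2*b) (at_right 0)"
    unfolding \<epsilon>_def using e b by real_asymp
  then have "\<forall>\<^sub>F \<delta> in at_right 0. 2*b - \<eta> < ln (\<delta> powr (-b) / 12) / - ln (\<epsilon> \<delta>)"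
    by (rule order_tendstoD) (use \<eta> in simp)
  moreover have "\<forall>\<^sub>F \<delta> in at_right 0. L * \<epsilon> \<delta> < e/32"
    using tendsto_mult_right_zero[OF \<epsilon>_lim, of L] by (rule order_tendstoD) (use e in simp)
  moreover have "\<forall>\<^sub>F \<delta> in at_right 0. \<epsilon> \<delta> < min 1 (e/2)"
    using \<epsilon>_lim by (rule order_tendstoD) (use e in simp)
  moreover have "\<forall>\<^sub>F \<delta> in at_right 0. \<delta> \<in> {0<..<1::real}"
    by (rule eventually_at_right_real) simp
  ultimately show ?thesis
  proof eventually_elim
    case (elim \<delta>)
    then have "0 < \<epsilon> \<delta>" using e by (simp add: \<epsilon>_def)
    moreover have "\<epsilon> \<delta> * \<epsilon> \<delta> = e*\<delta>/32" using e elim by (simp add: \<epsilon>_def)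
    then have "(L + \<epsilon> \<delta> / \<delta>) * \<epsilon> \<delta> = L * \<epsilon> \<delta> + e/32"
      using elim by (simp add: field_simps)
    ultimately show ?case using elim by (intro conjI exI[of _ "\<epsilon> \<delta>"]) auto
  qed
qed

text \<open>
  One stage: \<open>e\<close> is the previous scale, \<open>L\<close> bounds the total slope of the earlier teeth, and
  the new tooth has scale \<open>\<epsilon>\<close>, slope \<open>L + s\<close> and offset \<open>q\<close>.
\<close>

definition stage_ok :: "real set \<Rightarrow> real \<Rightarrow> real \<Rightarrow> real \<Rightarrow> real \<Rightarrow> real \<Rightarrow> real \<Rightarrow> int \<Rightarrow> bool" where
  "stage_ok X b \<eta> L e \<epsilon> s q \<longleftrightarrow> 0 < \<epsilon> \<and> \<epsilon> < 1 \<and> 0 \<le> s \<and> \<epsilon> \<le> e/2 \<and> (L + s) * \<epsilon> \<le> e/16 \<and>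
     (\<exists>S. finite S \<and> S \<subseteq> X \<and> 2*b - \<eta> \<le> ln (real (card S)) / - ln \<epsilon> \<and> sawtooth_separated \<epsilon> s q S)"

lemma stage_exists:
  fixes X :: "real set"
  assumes b: "0 < b" "ereal b < upper_box_dim X" and e: "0 < e" and \<eta>: "0 < \<eta>"
  shows "\<exists>\<epsilon> s q. stage_ok X b \<eta> L e \<epsilon> s q"
proof -
  have "\<exists>\<^sub>F \<delta> in at_right 0. \<delta> powr (-b) < real (grid_count \<delta> X) \<and> 0 < \<delta> \<and>
    (\<exists>\<epsilon>. 0 < \<epsilon> \<and> \<epsilon> < 1 \<and> \<epsilon> \<le> e/2 \<and> (L + \<epsilon>/\<delta>) * \<epsilon> \<le> e/16 \<and>
       2*b - \<eta> < ln (\<delta> powr (-b) / 12) / - ln \<epsilon>)"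
    using frequently_grid_count_gt[of b X] b eventually_scale_choice[OF e b(1) \<eta>]
    by (intro frequently_eventually_frequently) simp_all
  then obtain \<delta> \<epsilon> where \<delta>: "0 < \<delta>" "\<delta> powr (-b) < real (grid_count \<delta> X)"
    and \<epsilon>: "0 < \<epsilon>" "\<epsilon> < 1" "\<epsilon> \<le> e/2" "(L + \<epsilon>/\<delta>) * \<epsilon> \<le> e/16"
    and ratio: "2*b - \<eta> < ln (\<delta> powr (-b) / 12) / - ln \<epsilon>"
    by (auto dest: frequently_ex)
  obtain q S where S: "finite S" "S \<subseteq> X" "grid_count \<delta> X \<le> 12 * card S"
    and sep: "sawtooth_separated \<epsilon> (\<epsilon>/\<delta>) q S"
    using sawtooth_separated_subset[OF \<delta>(1) \<epsilon>(1), of X] by blast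
  have "\<delta> powr (-b) / 12 < real (card S)" using \<delta>(2) S(3) by linarith
  moreover have "0 < \<delta> powr (-b) / 12" using \<delta>(1) by simp
  ultimately have "ln (\<delta> powr (-b) / 12) \<le> ln (real (card S))"
    using ln_le_cancel_iff[of "\<delta> powr (-b) / 12" "real (card S)"] by linarith
  then have "ln (\<delta> powr (-b) / 12) / - ln \<epsilon> \<le> ln (real (card S)) / - ln \<epsilon>"
    using \<epsilon> by (intro divide_right_mono) simp_all
  then have "stage_ok X b \<eta> L e \<epsilon> (\<epsilon>/\<delta>) q"
    unfolding stage_ok_def using \<delta> \<epsilon> ratio S sep by auto
  then show ?thesis by blast
qed

lemma stage_sequence:
  fixes X :: "real set"
  assumes b: "0 < b" "ereal b < upper_box_dim X"
  shows "\<exists>(L :: nat \<Rightarrow> real) e \<epsilon> s (q :: nat \<Rightarrow> int). \<forall>k. 0 \<le> L k \<and>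
    stage_ok X b (1 / (real k + 1)) (L k) (e k) (\<epsilon> k) (s k) (q k) \<and>
    L (Suc k) = 2 * L k + s k \<and> e (Suc k) = \<epsilon> k"
proof -
  define P where "P n = (\<lambda>(L, e, \<epsilon>, s, q). 0 \<le> L \<and> 0 < e \<and> stage_ok X b (1 / (real n + 1)) L e \<epsilon> s q)"
    for n :: nat
  define R :: "real \<times> real \<times> real \<times> real \<times> int \<Rightarrow> real \<times> real \<times> real \<times> real \<times> int \<Rightarrow> bool"
    where "R = (\<lambda>(L, e, \<epsilon>, s, q) (L', e', _). L' = 2 * L + s \<and> e' = \<epsilon>)"
  have "\<exists>x. P 0 x"
  proof -
    obtain \<epsilon> s q where "stage_ok X b (1 / (real 0 + 1)) 0 1 \<epsilon> s q"
      using stage_exists[OF b, of 1 "1 / (real 0 + 1)" 0] by auto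
    then show ?thesis unfolding P_def by (intro exI[of _ "(0, 1, \<epsilon>, s, q)"]) simp
  qed
  moreover have "\<exists>y. P (Suc n) y \<and> R x y" if "P n x" for n x
  proof -
    obtain L e \<epsilon> s q where x: "x = (L, e, \<epsilon>, s, q)" by (cases x) blast
    then have "0 \<le> 2 * L + s" "0 < \<epsilon>" using that by (auto simp: P_def stage_ok_def)
    moreover obtain \<epsilon>' s' q' where "stage_ok X b (1 / (real (Suc n) + 1)) (2 * L + s) \<epsilon> \<epsilon>' s' q'"
      using stage_exists[OF b \<open>0 < \<epsilon>\<close>, of "1 / (real (Suc n) + 1)" "2 * L + s"] by auto
    ultimately show ?thesis unfolding P_def R_def x
      by (intro exI[of _ "(2 * L + s, \<epsilon>, \<epsilon>', s', q')"]) simp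
  qed
  ultimately obtain f where "\<forall>n. P n (f n) \<and> R (f n) (f (Suc n))"
    using dependent_nat_choice[of P "\<lambda>_. R"] by blast
  then show ?thesis unfolding P_def R_def
    by (intro exI[of _ "\<lambda>k. fst (f k)"] exI[of _ "\<lambda>k. fst (snd (f k))"] exI[of _ "\<lambda>k. fst (snd (snd (f k)))"]
        exI[of _ "\<lambda>k. fst (snd (snd (snd (f k))))"] exI[of _ "\<lambda>k. snd (snd (snd (snd (f k))))"])
      (simp add: split_beta)
qed

lemma graph_upper_box_dim_ge_double:
  fixes X :: "real set"
  assumes X: "X \<subseteq> {0..1}" and b: "0 < b" "ereal b < upper_box_dim X"
  shows "\<exists>f. uniformly_continuous_on X f \<and> ereal (2*b) \<le> upper_box_dim (graph_of X f)"
proof -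
  obtain L e \<epsilon> s q where L: "\<And>k. 0 \<le> L k" "\<And>k. L (Suc k) = 2 * L k + s k"
    and e: "\<And>k. e (Suc k) = \<epsilon> k"
    and stage: "\<And>k. stage_ok X b (1 / (real k + 1)) (L k) (e k) (\<epsilon> k) (s k) (q k)"
    using stage_sequence[OF b] by metis
  define lam where "lam k = L k + s k" for k
  interpret sawtooth_series lam \<epsilon> q
  proof
    fix k
    show "0 \<le> lam k" "0 < \<epsilon> k" using stage[of k] L(1)[of k] by (auto simp: stage_ok_def lam_def)
    show "\<epsilon> (Suc k) \<le> \<epsilon> k / 2" "lam (Suc k) * \<epsilon> (Suc k) \<le> \<epsilon> k / 16"
      using stage[of "Suc k"] unfolding stage_ok_def lam_def e by auto
  qed
  have lam_sum: "(\<Sum>j<k. lam j) = L k - L 0" for k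
    by (induction k) (simp_all add: L(2) lam_def)
  have ratio: "2*b - 1 / (real k + 1) \<le>
      ln (real (grid_count (\<epsilon> k) (graph_of X sawtooth))) / - ln (\<epsilon> k)" for k
  proof -
    obtain S where S: "finite S" "S \<subseteq> X" "sawtooth_separated (\<epsilon> k) (s k) (q k) S"
      and card_S: "2*b - 1 / (real k + 1) \<le> ln (real (card S)) / - ln (\<epsilon> k)"
      using stage[of k] unfolding stage_ok_def by (elim conjE exE)
    have "0 < \<epsilon> k" "\<epsilon> k < 1" using stage[of k] by (simp_all add: stage_ok_def)
    have "s k \<le> lam k - (\<Sum>j<k. lam j)"
      using L(1)[of 0] lam_sum[of k] lam_def[of k] by linarith
    then have "card S \<le> grid_count (\<epsilon> k) (graph_of X sawtooth)"
      by (rule card_le_grid_count_graph[OF bounded_graph_sawtooth[OF X] S(2,1,3)])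
    then have "ln (real (card S)) / - ln (\<epsilon> k) \<le>
        ln (real (grid_count (\<epsilon> k) (graph_of X sawtooth))) / - ln (\<epsilon> k)"
      using \<open>0 < \<epsilon> k\<close> \<open>\<epsilon> k < 1\<close> by (intro divide_right_mono ln_of_nat_mono) simp_all
    with card_S show ?thesis by linarith
  qed
  have "(\<lambda>k. 1 / (real k + 1)) \<longlonglongrightarrow> 0" by real_asymp
  then have "(\<lambda>k. 2*b - 1 / (real k + 1)) \<longlonglongrightarrow> 2*b"
    by (rule tendsto_diff[OF tendsto_const, of _ 0, simplified])
  with E_tendsto_zero ratio have "ereal (2*b) \<le> upper_box_dim (graph_of X sawtooth)"
    by (rule upper_box_dim_ge_sequence)
  with uniformly_continuous_on_sawtooth[OF X] show ?thesis by blast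
qed

theorem theorem2:
  fixes X :: "real set" and a :: ereal
  assumes "X \<subseteq> {0..1}" and "upper_box_dim X = a"
  shows "upper_graph_box_dim X \<ge> 2 * a"
proof (rule dense_le)
  have graph_le: "upper_box_dim (graph_of X f) \<le> upper_graph_box_dim X" if "uniformly_continuous_on X f" for f
    unfolding upper_graph_box_dim_def using that by (intro SUP_upper) simp
  fix y assume "y < 2 * a"
  show "y \<le> upper_graph_box_dim X"
  proof (cases "y \<le> 0")
    case True
    have "0 \<le> upper_graph_box_dim X"
      using upper_box_dim_nonneg graph_le[OF uniformly_continuous_on_const] by (rule order.trans)
    with True show ?thesis by simp
  next
    case False
    with \<open>y < 2 * a\<close> obtain r where r: "y = ereal r" "0 < r" by (cases y) auto
    with \<open>y < 2 * a\<close> have "ereal (r/2) < upper_box_dim X" using assms(2) by (cases a) auto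
    then obtain f where "uniformly_continuous_on X f" "ereal r \<le> upper_box_dim (graph_of X f)"
      using graph_upper_box_dim_ge_double[OF assms(1), of "r/2"] r(2) by auto
    then show ?thesis using graph_le r(1) by (blast intro: order.trans)
  qed
qed

end
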